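(* For every Cantor set $C\subset\mathbb{R}$ and every $\varepsilon\in(0,1)$, $$(1-\varepsilon)^2\le\frac{\tau_\varepsilon(C)}{\tau(C)}\le 1 .$$ In particular $\lim_{\varepsilon\to0}\tau_\varepsilon(C)=\tau(C)$.
   Context: A Cantor set is a non-empty compact, perfect, totally disconnected subset of $\mathbb{R}$; its gaps are the bounded connected components of its complement. For $\varepsilon\ge0$ and $u$ the right endpoint of a gap $G$ of a Cantor set $K$, the $\varepsilon$-bridge is $B_\varepsilon(u)=(u,\ell(\widetilde G))$, where $\widetilde G$ is the gap of $K$ to the right of $u$ with $|\widetilde G|\ge(1-\varepsilon)|G|$ such that every gap $\widehat G\subset(u,\ell(\widetilde G))$ satisfies $|\widehat G|<(1-\varepsilon)|G|$, and $\ell(\widetilde G)$ is the left endpoint of $\widetilde G$ (if no such gap exists, the bridge extends to $\max K$); $\varepsilon$-bridges at left endpoints of gaps are defined symmetrically. The $\varepsilon$-thickness is $\tau_\varepsilon(K)=\inf_u|B_\varepsilon(u)|/|G|$, the infimum over all gap endpoints $u$, and $\tau(K)=\tau_0(K)$ is the Newhouse thickness. *)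

theory Defs
  imports "HOL-Analysis.Analysis"
begin

definition cantor_set :: "real set \<Rightarrow> bool" where
  "cantor_set K \<longleftrightarrow> K \<noteq> {} \<and> compact K
     \<and> (\<forall>x\<in>K. x islimpt K)
     \<and> (\<forall>x\<in>K. connected_component_set K x = {x})"

definition gaps :: "real set \<Rightarrow> real set set" where
  "gaps K = {G. G \<in> components (- K) \<and> bounded G}"

definition glen :: "real set \<Rightarrow> real" where
  "glen G = Sup G - Inf G"

definition right_bridge_end :: "real \<Rightarrow> real set \<Rightarrow> real set \<Rightarrow> real" where
  "right_bridge_end \<epsilon> K G =
     (let u = Sup G;
          ok = (\<lambda>H. H \<in> gaps K \<and> u \<le> Inf H \<and> glen H \<ge> (1 - \<epsilon>) * glen G
                  \<and> (\<forall>H'\<in>gaps K. H' \<subseteq> {u<..<Inf H} \<longrightarrow> glen H' < (1 - \<epsilon>) * glen G))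
      in if (\<exists>H. ok H) then Inf (THE H. ok H) else Sup K)"

definition left_bridge_end :: "real \<Rightarrow> real set \<Rightarrow> real set \<Rightarrow> real" where
  "left_bridge_end \<epsilon> K G =
     (let v = Inf G;
          ok = (\<lambda>H. H \<in> gaps K \<and> Sup H \<le> v \<and> glen H \<ge> (1 - \<epsilon>) * glen G
                  \<and> (\<forall>H'\<in>gaps K. H' \<subseteq> {Sup H<..<v} \<longrightarrow> glen H' < (1 - \<epsilon>) * glen G))
      in if (\<exists>H. ok H) then Sup (THE H. ok H) else Inf K)"

definition eps_thickness :: "real \<Rightarrow> real set \<Rightarrow> real" where
  "eps_thickness \<epsilon> K =
     Inf ((\<lambda>G. (right_bridge_end \<epsilon> K G - Sup G) / glen G) ` gaps K
        \<union> (\<lambda>G. (Inf G - left_bridge_end \<epsilon> K G) / glen G) ` gaps K)"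

definition thickness :: "real set \<Rightarrow> real" where
  "thickness K = eps_thickness 0 K"

end

theory Submission
  imports Defs
begin

text \<open>Lowering the threshold from \<open>|G|\<close> to \<open>(1 - \<epsilon>) |G|\<close> can only shorten the bridge at an
  endpoint of a gap \<open>G\<close>, which gives \<open>\<tau>\<^sub>\<epsilon> \<le> \<tau>\<close>. The bridge changes only if it now stops at
  a gap \<open>H\<close> with \<open>(1 - \<epsilon>) |G| \<le> |H| < |G|\<close>. Then, looking left from \<open>H\<close>, \<open>G\<close> is the first
  gap at least as long as \<open>H\<close>, so the new bridge is the 0-bridge at the left endpoint of \<open>H\<close>
  and has length at least \<open>\<tau> |H| \<ge> (1 - \<epsilon>) \<tau> |G|\<close>. Hence \<open>(1 - \<epsilon>) \<tau> \<le> \<tau>\<^sub>\<epsilon> \<le> \<tau>\<close>,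
  which is stronger than the squared bound, and the limit follows by squeezing.
  Bridges at left endpoints are reduced to bridges at right endpoints by the reflection
  \<open>x \<mapsto> -x\<close>; finiteness of the set of gaps longer than a given length guarantees that
  the gap where a bridge stops exists.\<close>

lemma open_connected_bounded_real_eq_Ioo:
  fixes G :: "real set"
  assumes "open G" "connected G" "bounded G" "G \<noteq> {}"
  shows "Inf G < Sup G \<and> G = {Inf G<..<Sup G}"
proof -
  have bdd: "bdd_below G" "bdd_above G"
    using assms(3) bounded_imp_bdd_below bounded_imp_bdd_above by auto
  have "G \<subseteq> {Inf G<..<Sup G}"
  proof
    fix x assume "x \<in> G"
    then obtain d where d: "d > 0" "ball x d \<subseteq> G"
      using assms(1) open_contains_ball by blast
    then have "x - d/2 \<in> G" "x + d/2 \<in> G"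
      by (auto simp: dist_real_def intro!: subsetD[OF d(2)])
    then have "Inf G \<le> x - d/2" "x + d/2 \<le> Sup G"
      using bdd cInf_lower cSup_upper by auto
    then show "x \<in> {Inf G<..<Sup G}" using d by auto
  qed
  moreover have "{Inf G<..<Sup G} \<subseteq> G"
  proof
    fix x assume x: "x \<in> {Inf G<..<Sup G}"
    then obtain y z where "y \<in> G" "y < x" "z \<in> G" "x < z"
      using cInf_less_iff[OF assms(4) bdd(1)] less_cSup_iff[OF assms(4) bdd(2)] by auto
    then show "x \<in> G"
      using assms(2) unfolding connected_iff_interval by (meson less_imp_le)
  qed
  ultimately show ?thesis using assms(4) by auto
qed

lemma mem_gaps_iff:
  fixes K :: "real set"
  assumes "closed K"
  shows "G \<in> gaps K \<longleftrightarrow>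
    (\<exists>a b. a < b \<and> a \<in> K \<and> b \<in> K \<and> {a<..<b} \<inter> K = {} \<and> G = {a<..<b})"
proof
  assume "G \<in> gaps K"
  then have comp: "G \<in> components (- K)" and "bounded G"
    by (auto simp: gaps_def)
  moreover have "open G"
    using open_components[OF _ comp] assms by auto
  ultimately obtain a b where ab: "a < b" "G = {a<..<b}"
    using open_connected_bounded_real_eq_Ioo in_components_connected[OF comp]
      in_components_nonempty[OF comp] by blast
  then have "a \<in> frontier G" "b \<in> frontier G"
    by (simp_all add: frontier_def interior_open)
  then have "a \<in> K" "b \<in> K"
    using frontier_of_components_closed_complement[OF assms comp] by blast+
  moreover have "G \<inter> K = {}"
    using in_components_subset[OF comp] by auto
  ultimately show "\<exists>a b. a < b \<and> a \<in> K \<and> b \<in> K \<and> {a<..<b} \<inter> K = {} \<and> G = {a<..<b}"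
    using ab by blast
next
  assume "\<exists>a b. a < b \<and> a \<in> K \<and> b \<in> K \<and> {a<..<b} \<inter> K = {} \<and> G = {a<..<b}"
  then obtain a b where ab: "a < b" "a \<in> K" "b \<in> K" "{a<..<b} \<inter> K = {}" "G = {a<..<b}"
    by blast
  then have mid: "(a + b) / 2 \<in> G" and GK: "G \<subseteq> - K"
    by auto
  then have "- K \<noteq> {}" by blast
  then obtain C where C: "C \<in> components (- K)" "G \<subseteq> C"
    using exists_component_superset[OF GK] ab(5) by auto
  have between: "w \<in> C" if "y \<in> C" "z \<in> C" "y \<le> w" "w \<le> z" for y z w
    using in_components_connected[OF C(1)] that unfolding connected_iff_interval by blast
  have ends: "a \<notin> C" "b \<notin> C" and mid_C: "(a + b) / 2 \<in> C"
    using in_components_subset[OF C(1)] C(2) ab mid by auto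
  have "C \<subseteq> G"
  proof
    fix x assume "x \<in> C"
    then have "\<not> x \<le> a" "\<not> b \<le> x"
      using between[OF _ mid_C, of x a] between[OF mid_C, of x b] ends ab(1) by auto
    then show "x \<in> G" using ab(5) by auto
  qed
  with C have "G \<in> components (- K)" by auto
  then show "G \<in> gaps K" using ab by (auto simp: gaps_def)
qed

lemma gapE:
  fixes K :: "real set"
  assumes "closed K" "G \<in> gaps K"
  obtains a b where "a < b" "G = {a<..<b}" "a \<in> K" "b \<in> K" "{a<..<b} \<inter> K = {}"
    "Inf G = a" "Sup G = b" "glen G = b - a"
  using assms by (auto simp: mem_gaps_iff glen_def)

lemma glen_gap_pos: "closed K \<Longrightarrow> G \<in> gaps K \<Longrightarrow> 0 < glen G"
  by (erule gapE) auto

lemma gap_endpoints_mem: "closed K \<Longrightarrow> G \<in> gaps K \<Longrightarrow> Inf G \<in> K \<and> Sup G \<in> K"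
  by (erule gapE) auto

lemma gaps_ordered:
  fixes K :: "real set"
  assumes "closed K" "G \<in> gaps K" "H \<in> gaps K" "G \<noteq> H"
  shows "Sup G \<le> Inf H \<or> Sup H \<le> Inf G"
proof -
  obtain a b where G: "a < b" "G = {a<..<b}" "a \<in> K" "b \<in> K" "{a<..<b} \<inter> K = {}"
    using assms(1,2) by (rule gapE)
  obtain c d where H: "c < d" "H = {c<..<d}" "c \<in> K" "d \<in> K" "{c<..<d} \<inter> K = {}"
    using assms(1,3) by (rule gapE)
  have "\<not> (c < a \<and> a < d)" "\<not> (a < c \<and> c < b)" "\<not> (c < b \<and> b < d)" "\<not> (a < d \<and> d < b)"
    using G H by auto
  then have "b \<le> c \<or> d \<le> a"
    using assms(4) G(1,2) H(1,2) by (metis linorder_neqE_linordered_idom not_le)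
  then show ?thesis using G H by simp
qed

lemma gap_eq_if_Inf_eq:
  fixes K :: "real set"
  assumes "closed K" "G \<in> gaps K" "H \<in> gaps K" "Inf G = Inf H"
  shows "G = H"
proof (rule ccontr)
  assume "G \<noteq> H"
  then have "Sup G \<le> Inf H \<or> Sup H \<le> Inf G"
    using gaps_ordered[OF assms(1-3)] by blast
  moreover have "Inf G < Sup G" "Inf H < Sup H"
    using glen_gap_pos[OF assms(1)] assms(2,3) by (auto simp: glen_def)
  ultimately show False
    using assms(4) by linarith
qed

lemma Inf_uminus_image_real: "Inf (uminus ` S) = - Sup (S :: real set)"
  by (simp add: Inf_real_def image_image)

lemma Sup_uminus_image_real: "Sup (uminus ` S) = - Inf (S :: real set)"
  by (simp add: Inf_real_def image_image)

lemma glen_uminus_image [simp]: "glen (uminus ` G) = glen G"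
  by (simp add: glen_def Inf_uminus_image_real Sup_uminus_image_real)

lemma uminus_image_mem_gaps:
  fixes K :: "real set"
  assumes "closed K" "G \<in> gaps K"
  shows "uminus ` G \<in> gaps (uminus ` K)"
proof -
  obtain a b where "a < b" "G = {a<..<b}" "a \<in> K" "b \<in> K" "{a<..<b} \<inter> K = {}"
    using assms by (rule gapE)
  then have "- b < - a \<and> - b \<in> uminus ` K \<and> - a \<in> uminus ` K
      \<and> {- b<..<- a} \<inter> uminus ` K = {} \<and> uminus ` G = {- b<..<- a}"
    by (force simp: image_iff)
  then show ?thesis
    unfolding mem_gaps_iff[OF closed_negations[OF assms(1)]] by blast
qed

lemma uminus_image_mem_gaps_iff:
  fixes K :: "real set"
  assumes "closed K"
  shows "uminus ` H \<in> gaps (uminus ` K) \<longleftrightarrow> H \<in> gaps K"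
  using uminus_image_mem_gaps[OF assms, of H]
    uminus_image_mem_gaps[OF closed_negations[OF assms], of "uminus ` H"]
  by (auto simp: image_image)

lemma gaps_uminus_image:
  fixes K :: "real set"
  assumes "closed K"
  shows "gaps (uminus ` K) = (\<lambda>G. uminus ` G) ` gaps K"
proof
  show "(\<lambda>G. uminus ` G) ` gaps K \<subseteq> gaps (uminus ` K)"
    using uminus_image_mem_gaps[OF assms] by blast
next
  show "gaps (uminus ` K) \<subseteq> (\<lambda>G. uminus ` G) ` gaps K"
  proof
    fix G assume "G \<in> gaps (uminus ` K)"
    then have "uminus ` G \<in> gaps K"
      using uminus_image_mem_gaps[OF closed_negations[OF assms]] by (simp add: image_image)
    moreover have "G = uminus ` uminus ` G" by (simp add: image_image)
    ultimately show "G \<in> (\<lambda>G. uminus ` G) ` gaps K" by blast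
  qed
qed

lemma finite_long_gaps:
  fixes K :: "real set"
  assumes "compact K" "0 < c"
  shows "finite {H \<in> gaps K. c \<le> glen H}"
proof -
  have K: "closed K" "bdd_below K" "bdd_above K"
    using compact_imp_closed[OF assms(1)] compact_imp_bounded[OF assms(1)]
    by (auto intro: bounded_imp_bdd_below bounded_imp_bdd_above)
  define S where "S = {H \<in> gaps K. c \<le> glen H}"
  define f where "f H = \<lfloor>Inf H / c\<rfloor>" for H
  have "f G < f H" if "G \<in> S" "H \<in> S" "Sup G \<le> Inf H" for G H
  proof -
    have "Inf G + c \<le> Inf H"
      using that by (auto simp: S_def glen_def)
    then have "(Inf G + c) / c \<le> Inf H / c"
      using assms(2) by (intro divide_right_mono) auto
    then have "Inf G / c + 1 \<le> Inf H / c"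
      using assms(2) by (simp add: add_divide_distrib)
    then show ?thesis
      unfolding f_def by linarith
  qed
  then have "inj_on f S"
    using gaps_ordered[OF K(1)] unfolding S_def inj_on_def by (metis (no_types, lifting) less_irrefl mem_Collect_eq)
  moreover have "f ` S \<subseteq> {\<lfloor>Inf K / c\<rfloor>..\<lfloor>Sup K / c\<rfloor>}"
  proof
    fix y assume "y \<in> f ` S"
    then obtain H where "H \<in> gaps K" "y = f H" by (auto simp: S_def)
    then have "Inf H \<in> K"
      using gap_endpoints_mem[OF K(1)] by blast
    then have "Inf K \<le> Inf H" "Inf H \<le> Sup K"
      using K by (auto intro: cInf_lower cSup_upper)
    then show "y \<in> {\<lfloor>Inf K / c\<rfloor>..\<lfloor>Sup K / c\<rfloor>}"
      using assms(2) \<open>y = f H\<close> unfolding f_def by (auto intro!: floor_mono divide_right_mono)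
  qed
  ultimately show ?thesis
    unfolding S_def[symmetric] by (meson finite_atLeastAtMost_int finite_imageD finite_subset)
qed

lemma gap_between_points:
  fixes K :: "real set"
  assumes "compact K" "p \<in> K" "q \<in> K" "p < z" "z < q" "z \<notin> K"
  shows "\<exists>G\<in>gaps K. z \<in> G"
proof -
  define a where "a = Sup (K \<inter> {..z})"
  define b where "b = Inf (K \<inter> {z..})"
  have bdd: "bdd_above (K \<inter> {..z})" "bdd_below (K \<inter> {z..})"
    by (auto intro: bdd_above_Int2 bdd_below_Int2)
  have closed_parts: "closed (K \<inter> {..z})" "closed (K \<inter> {z..})"
    using compact_imp_closed[OF assms(1)] by auto
  have "a \<in> K \<inter> {..z}"
    unfolding a_def using assms(2,4) by (intro closed_contains_Sup bdd closed_parts) auto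
  moreover have "b \<in> K \<inter> {z..}"
    unfolding b_def using assms(3,5) by (intro closed_contains_Inf bdd closed_parts) auto
  moreover have "{a<..<b} \<inter> K = {}"
  proof -
    have "x \<le> a" if "x \<in> K" "x \<le> z" for x
      unfolding a_def using that bdd by (intro cSup_upper) auto
    moreover have "b \<le> x" if "x \<in> K" "z \<le> x" for x
      unfolding b_def using that bdd by (intro cInf_lower) auto
    ultimately show ?thesis by force
  qed
  ultimately have "a < z" "z < b" "a \<in> K" "b \<in> K" "{a<..<b} \<inter> K = {}"
    using assms(6) by (auto simp: order_le_less)
  moreover have "a < b"
    using \<open>a < z\<close> \<open>z < b\<close> by simp
  ultimately have "{a<..<b} \<in> gaps K"
    unfolding mem_gaps_iff[OF compact_imp_closed[OF assms(1)]] by blast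
  then show ?thesis
    using \<open>a < z\<close> \<open>z < b\<close> by (intro bexI[of _ "{a<..<b}"]) auto
qed

lemma cantor_set_gaps_nonempty:
  assumes "cantor_set K"
  shows "gaps K \<noteq> {}"
proof -
  have K: "compact K" "K \<noteq> {}" "\<forall>x\<in>K. x islimpt K" "\<forall>x\<in>K. connected_component_set K x = {x}"
    using assms by (auto simp: cantor_set_def)
  then obtain x y where xy: "x \<in> K" "y \<in> K" "x \<noteq> y"
    by (meson UNIV_I all_not_in_conv islimpt_def open_UNIV)
  define p q where "p = min x y" and "q = max x y"
  have pq: "p \<in> K" "q \<in> K" "p < q"
    using xy by (auto simp: p_def q_def min_def max_def)
  have "\<not> {p..q} \<subseteq> K"
  proof
    assume "{p..q} \<subseteq> K"
    then have "q \<in> connected_component_set K p"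
      using pq by (auto simp: connected_component_def intro!: exI[of _ "{p..q}"])
    then show False using K(4) pq by auto
  qed
  then obtain z where "p \<le> z" "z \<le> q" "z \<notin> K"
    by (meson atLeastAtMost_iff subsetI)
  then have "p < z" "z < q" "z \<notin> K"
    using pq by (auto simp: order_le_less)
  then show ?thesis
    using gap_between_points[OF K(1) pq(1,2)] by blast
qed

definition first_long_gap_right :: "real set \<Rightarrow> real \<Rightarrow> real \<Rightarrow> real set \<Rightarrow> bool" where
  "first_long_gap_right K u c H \<longleftrightarrow> H \<in> gaps K \<and> u \<le> Inf H \<and> glen H \<ge> c
     \<and> (\<forall>H'\<in>gaps K. H' \<subseteq> {u<..<Inf H} \<longrightarrow> glen H' < c)"

definition first_long_gap_left :: "real set \<Rightarrow> real \<Rightarrow> real \<Rightarrow> real set \<Rightarrow> bool" where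
  "first_long_gap_left K v c H \<longleftrightarrow> H \<in> gaps K \<and> Sup H \<le> v \<and> glen H \<ge> c
     \<and> (\<forall>H'\<in>gaps K. H' \<subseteq> {Sup H<..<v} \<longrightarrow> glen H' < c)"

lemma right_bridge_end_first_long_gap:
  "right_bridge_end \<epsilon> K G =
    (if \<exists>H. first_long_gap_right K (Sup G) ((1 - \<epsilon>) * glen G) H
     then Inf (THE H. first_long_gap_right K (Sup G) ((1 - \<epsilon>) * glen G) H) else Sup K)"
  unfolding right_bridge_end_def first_long_gap_right_def Let_def by simp

lemma left_bridge_end_first_long_gap:
  "left_bridge_end \<epsilon> K G =
    (if \<exists>H. first_long_gap_left K (Inf G) ((1 - \<epsilon>) * glen G) H
     then Sup (THE H. first_long_gap_left K (Inf G) ((1 - \<epsilon>) * glen G) H) else Inf K)"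
  unfolding left_bridge_end_def first_long_gap_left_def Let_def by simp

lemma first_long_gap_right_Inf_antimono:
  fixes K :: "real set"
  assumes "closed K" "first_long_gap_right K u c H" "first_long_gap_right K u c' H'" "c' \<le> c"
  shows "Inf H' \<le> Inf H"
proof (rule ccontr)
  assume less: "\<not> Inf H' \<le> Inf H"
  have gaps: "H \<in> gaps K" "H' \<in> gaps K"
    using assms(2,3) by (auto simp: first_long_gap_right_def)
  have "Inf H' < Sup H'"
    using glen_gap_pos[OF assms(1) gaps(2)] by (simp add: glen_def)
  then have "Sup H \<le> Inf H'"
    using gaps_ordered[OF assms(1) gaps] less by force
  moreover obtain a b where "a < b" "H = {a<..<b}" "Inf H = a" "Sup H = b"
    using assms(1) gaps(1) by (rule gapE)
  ultimately have "H \<subseteq> {u<..<Inf H'}"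
    using assms(2) by (auto simp: first_long_gap_right_def)
  then have "glen H < c'"
    using assms(3) gaps(1) by (auto simp: first_long_gap_right_def)
  then show False
    using assms(2,4) by (auto simp: first_long_gap_right_def)
qed

lemma first_long_gap_right_unique:
  fixes K :: "real set"
  assumes "closed K" "first_long_gap_right K u c H" "first_long_gap_right K u c H'"
  shows "H' = H"
proof -
  have "Inf H' = Inf H"
    using first_long_gap_right_Inf_antimono[OF assms] first_long_gap_right_Inf_antimono[OF assms(1,3,2)]
    by simp
  then show ?thesis
    using gap_eq_if_Inf_eq[OF assms(1)] assms(2,3) by (simp add: first_long_gap_right_def)
qed

lemma first_long_gap_right_exists:
  fixes K :: "real set"
  assumes "compact K" "0 < c" "H\<^sub>0 \<in> gaps K" "u \<le> Inf H\<^sub>0" "c \<le> glen H\<^sub>0"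
  shows "\<exists>H. first_long_gap_right K u c H"
proof -
  have K_closed: "closed K"
    using assms(1) by (rule compact_imp_closed)
  define S where "S = {H \<in> gaps K. u \<le> Inf H \<and> c \<le> glen H}"
  have "finite S"
    by (rule finite_subset[OF _ finite_long_gaps[OF assms(1,2)]]) (auto simp: S_def)
  moreover have "H\<^sub>0 \<in> S"
    using assms(3-5) by (simp add: S_def)
  ultimately obtain H where H: "H \<in> S" and leftmost: "\<And>H'. H' \<in> S \<Longrightarrow> Inf H \<le> Inf H'"
    using arg_min_if_finite[of S Inf] by (metis empty_iff not_less)
  have "glen H' < c" if H': "H' \<in> gaps K" "H' \<subseteq> {u<..<Inf H}" for H'
  proof (rule ccontr)
    assume "\<not> glen H' < c"
    obtain a b where ab: "a < b" "H' = {a<..<b}" "Inf H' = a"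
      using K_closed H'(1) by (rule gapE)
    then have "u \<le> a" "b \<le> Inf H"
      using H'(2) by (auto simp: greaterThanLessThan_subseteq_greaterThanLessThan)
    with \<open>\<not> glen H' < c\<close> have "H' \<in> S"
      using H'(1) ab by (auto simp: S_def)
    then show False
      using leftmost \<open>b \<le> Inf H\<close> ab by fastforce
  qed
  then have "first_long_gap_right K u c H"
    using H by (auto simp: first_long_gap_right_def S_def)
  then show ?thesis ..
qed

lemma right_bridge_end_eq_Inf:
  fixes K :: "real set"
  assumes "closed K" "first_long_gap_right K (Sup G) ((1 - \<epsilon>) * glen G) H"
  shows "right_bridge_end \<epsilon> K G = Inf H"
proof -
  have "(THE H. first_long_gap_right K (Sup G) ((1 - \<epsilon>) * glen G) H) = H"
  proof (rule the_equality)
    fix H' assume "first_long_gap_right K (Sup G) ((1 - \<epsilon>) * glen G) H'"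
    then show "H' = H"
      by (rule first_long_gap_right_unique[OF assms])
  qed (rule assms(2))
  then show ?thesis
    using assms(2) by (auto simp: right_bridge_end_first_long_gap)
qed

lemma right_bridge_end_eq_Sup:
  assumes "\<nexists>H. first_long_gap_right K (Sup G) ((1 - \<epsilon>) * glen G) H"
  shows "right_bridge_end \<epsilon> K G = Sup K"
  using assms by (simp add: right_bridge_end_first_long_gap)

lemma first_long_gap_left_iff_right_uminus:
  fixes K :: "real set"
  assumes "closed K"
  shows "first_long_gap_left K v c H
    \<longleftrightarrow> first_long_gap_right (uminus ` K) (- v) c (uminus ` H)"
proof -
  have "J \<subseteq> {Sup H<..<v} \<longleftrightarrow> uminus ` J \<subseteq> {- v<..<Inf (uminus ` H)}" for J
    by (auto simp: Inf_uminus_image_real)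
  then have "(\<forall>H'\<in>gaps (uminus ` K). H' \<subseteq> {- v<..<Inf (uminus ` H)} \<longrightarrow> glen H' < c)
      \<longleftrightarrow> (\<forall>J\<in>gaps K. J \<subseteq> {Sup H<..<v} \<longrightarrow> glen J < c)"
    by (simp add: gaps_uminus_image[OF assms])
  then show ?thesis
    unfolding first_long_gap_left_def first_long_gap_right_def uminus_image_mem_gaps_iff[OF assms]
    by (auto simp: Inf_uminus_image_real)
qed

lemma left_bridge_end_uminus:
  fixes K :: "real set"
  assumes "closed K"
  shows "left_bridge_end \<epsilon> K G = - right_bridge_end \<epsilon> (uminus ` K) (uminus ` G)"
proof -
  define c where "c = (1 - \<epsilon>) * glen G"
  have closed': "closed (uminus ` K)"
    using assms by (rule closed_negations)
  have iff: "first_long_gap_left K (Inf G) c H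
      \<longleftrightarrow> first_long_gap_right (uminus ` K) (Sup (uminus ` G)) ((1 - \<epsilon>) * glen (uminus ` G)) (uminus ` H)"
    for H
    by (simp add: first_long_gap_left_iff_right_uminus[OF assms] Sup_uminus_image_real c_def)
  show ?thesis
  proof (cases "\<exists>H. first_long_gap_left K (Inf G) c H")
    case True
    then obtain H where H: "first_long_gap_left K (Inf G) c H" ..
    have "(THE H. first_long_gap_left K (Inf G) c H) = H"
    proof (rule the_equality)
      fix H' assume "first_long_gap_left K (Inf G) c H'"
      then show "H' = H"
        using first_long_gap_right_unique[OF closed' iff[THEN iffD1, OF H] iff[THEN iffD1]]
        by (simp add: inj_image_eq_iff)
    qed (rule H)
    then have "left_bridge_end \<epsilon> K G = Sup H"
      using H by (auto simp: left_bridge_end_first_long_gap c_def[symmetric])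
    moreover have "right_bridge_end \<epsilon> (uminus ` K) (uminus ` G) = - Sup H"
      using right_bridge_end_eq_Inf[OF closed'] H iff by (simp add: Inf_uminus_image_real)
    ultimately show ?thesis by simp
  next
    case False
    then have "\<nexists>H'. first_long_gap_right (uminus ` K) (Sup (uminus ` G)) ((1 - \<epsilon>) * glen (uminus ` G)) H'"
      using iff[of "uminus ` _"] by (auto simp: image_image)
    then show ?thesis
      using False right_bridge_end_eq_Sup
      by (simp add: left_bridge_end_first_long_gap c_def[symmetric] Sup_uminus_image_real)
  qed
qed

lemma left_bridge_end_eq_Sup:
  fixes K :: "real set"
  assumes "closed K" "first_long_gap_left K (Inf G) ((1 - \<epsilon>) * glen G) H"
  shows "left_bridge_end \<epsilon> K G = Sup H"
proof -
  have "first_long_gap_right (uminus ` K) (Sup (uminus ` G)) ((1 - \<epsilon>) * glen (uminus ` G)) (uminus ` H)"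
    using assms(2) by (simp add: first_long_gap_left_iff_right_uminus[OF assms(1)] Sup_uminus_image_real)
  then show ?thesis
    using right_bridge_end_eq_Inf[OF closed_negations[OF assms(1)]]
    by (simp add: left_bridge_end_uminus[OF assms(1)] Inf_uminus_image_real)
qed

lemma right_bridge_end_bounds:
  fixes K :: "real set"
  assumes "compact K" "G \<in> gaps K"
  shows "Sup G \<le> right_bridge_end \<epsilon> K G \<and> right_bridge_end \<epsilon> K G \<le> Sup K"
proof -
  have K: "closed K" "bdd_above K"
    using assms(1) by (auto intro: compact_imp_closed bounded_imp_bdd_above compact_imp_bounded)
  show ?thesis
  proof (cases "\<exists>H. first_long_gap_right K (Sup G) ((1 - \<epsilon>) * glen G) H")
    case True
    then obtain H where H: "first_long_gap_right K (Sup G) ((1 - \<epsilon>) * glen G) H" ..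
    then have "Inf H \<in> K" "Sup G \<le> Inf H"
      using gap_endpoints_mem[OF K(1)] by (auto simp: first_long_gap_right_def)
    then show ?thesis
      using right_bridge_end_eq_Inf[OF K(1) H] K(2) by (auto intro: cSup_upper)
  next
    case False
    then show ?thesis
      using right_bridge_end_eq_Sup gap_endpoints_mem[OF K(1) assms(2)] K(2) by (auto intro: cSup_upper)
  qed
qed

lemma right_bridge_end_antimono:
  fixes K :: "real set"
  assumes "compact K" "G \<in> gaps K" "\<epsilon> \<le> \<epsilon>'" "\<epsilon>' < 1"
  shows "right_bridge_end \<epsilon>' K G \<le> right_bridge_end \<epsilon> K G"
proof (cases "\<exists>H. first_long_gap_right K (Sup G) ((1 - \<epsilon>) * glen G) H")
  case True
  then obtain H where H: "first_long_gap_right K (Sup G) ((1 - \<epsilon>) * glen G) H" ..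
  have K: "closed K"
    using assms(1) by (rule compact_imp_closed)
  have c: "0 < (1 - \<epsilon>') * glen G" "(1 - \<epsilon>') * glen G \<le> (1 - \<epsilon>) * glen G"
    using glen_gap_pos[OF K assms(2)] assms(3,4) by (auto intro: mult_right_mono)
  moreover have "H \<in> gaps K" "Sup G \<le> Inf H" "(1 - \<epsilon>') * glen G \<le> glen H"
    using H c(2) by (auto simp: first_long_gap_right_def)
  ultimately obtain H' where H': "first_long_gap_right K (Sup G) ((1 - \<epsilon>') * glen G) H'"
    using first_long_gap_right_exists[OF assms(1)] by blast
  show ?thesis
    using first_long_gap_right_Inf_antimono[OF K H H' c(2)]
    by (simp add: right_bridge_end_eq_Inf[OF K H] right_bridge_end_eq_Inf[OF K H'])
next
  case False
  then show ?thesis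
    using right_bridge_end_eq_Sup right_bridge_end_bounds[OF assms(1,2)] by metis
qed

lemma right_bridge_end_cases:
  fixes K :: "real set"
  assumes "compact K" "G \<in> gaps K" "0 \<le> \<epsilon>" "\<epsilon> < 1"
  shows "right_bridge_end \<epsilon> K G = right_bridge_end 0 K G
    \<or> (\<exists>H\<in>gaps K. (1 - \<epsilon>) * glen G \<le> glen H \<and> left_bridge_end 0 K H = Sup G
          \<and> right_bridge_end \<epsilon> K G = Inf H)"
proof -
  have K: "closed K"
    using assms(1) by (rule compact_imp_closed)
  define c where "c = (1 - \<epsilon>) * glen G"
  have c: "0 < c" "c \<le> glen G"
    using glen_gap_pos[OF K assms(2)] assms(3,4) by (auto simp: c_def mult_le_cancel_right1)
  show ?thesis
  proof (cases "\<exists>H. first_long_gap_right K (Sup G) c H")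
    case False
    have "\<nexists>H. first_long_gap_right K (Sup G) (glen G) H"
    proof
      assume "\<exists>H. first_long_gap_right K (Sup G) (glen G) H"
      then obtain H where "first_long_gap_right K (Sup G) (glen G) H" ..
      then show False
        using first_long_gap_right_exists[OF assms(1) c(1), of H] c(2) False
        by (auto simp: first_long_gap_right_def)
    qed
    then show ?thesis
      using False right_bridge_end_eq_Sup[of K G 0] right_bridge_end_eq_Sup[of K G \<epsilon>]
      by (simp add: c_def)
  next
    case True
    then obtain H where H: "first_long_gap_right K (Sup G) c H" ..
    have rbe: "right_bridge_end \<epsilon> K G = Inf H"
      using right_bridge_end_eq_Inf[OF K] H by (simp add: c_def)
    show ?thesis
    proof (cases "glen G \<le> glen H")
      case True
      then have "first_long_gap_right K (Sup G) ((1 - 0) * glen G) H"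
        using H c(2) by (auto simp: first_long_gap_right_def)
      then show ?thesis
        using rbe right_bridge_end_eq_Inf[OF K] by simp
    next
      case False
      then have "first_long_gap_left K (Inf H) ((1 - 0) * glen H) G"
        using H assms(2) by (force simp: first_long_gap_left_def first_long_gap_right_def)
      then have "left_bridge_end 0 K H = Sup G"
        by (rule left_bridge_end_eq_Sup[OF K])
      then show ?thesis
        using H rbe by (auto simp: first_long_gap_right_def c_def)
    qed
  qed
qed

definition bridge_ratio :: "real \<Rightarrow> real set \<Rightarrow> real set \<Rightarrow> real" where
  "bridge_ratio \<epsilon> K G = (right_bridge_end \<epsilon> K G - Sup G) / glen G"

definition bridge_ratios :: "real \<Rightarrow> real set \<Rightarrow> real set" where
  "bridge_ratios \<epsilon> K =
    bridge_ratio \<epsilon> K ` gaps K \<union> bridge_ratio \<epsilon> (uminus ` K) ` gaps (uminus ` K)"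

lemma eps_thickness_eq_Inf_bridge_ratios:
  fixes K :: "real set"
  assumes "closed K"
  shows "eps_thickness \<epsilon> K = Inf (bridge_ratios \<epsilon> K)"
proof -
  have "(\<lambda>G. (Inf G - left_bridge_end \<epsilon> K G) / glen G) ` gaps K
      = bridge_ratio \<epsilon> (uminus ` K) ` gaps (uminus ` K)"
    by (simp add: gaps_uminus_image[OF assms] image_image bridge_ratio_def
        left_bridge_end_uminus[OF assms] Sup_uminus_image_real add.commute)
  then show ?thesis
    by (simp add: eps_thickness_def bridge_ratios_def bridge_ratio_def[abs_def])
qed

lemma bridge_ratios_uminus: "bridge_ratios \<epsilon> (uminus ` K) = bridge_ratios \<epsilon> K"
  by (simp add: bridge_ratios_def image_image Un_commute)

lemma bridge_ratiosE:
  fixes K :: "real set"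
  assumes "x \<in> bridge_ratios \<epsilon> K" "compact K"
  obtains L G where "compact L" "\<And>\<epsilon>'. bridge_ratios \<epsilon>' L = bridge_ratios \<epsilon>' K"
    "G \<in> gaps L" "x = bridge_ratio \<epsilon> L G"
proof -
  consider G where "G \<in> gaps K" "x = bridge_ratio \<epsilon> K G"
    | G where "G \<in> gaps (uminus ` K)" "x = bridge_ratio \<epsilon> (uminus ` K) G"
    using assms(1) unfolding bridge_ratios_def by blast
  then show thesis
  proof cases
    case 1
    then show thesis by (rule that[OF assms(2) refl])
  next
    case 2
    then show thesis by (rule that[OF compact_negations[OF assms(2)] bridge_ratios_uminus])
  qed
qed

lemma bridge_ratio_mem: "G \<in> gaps K \<Longrightarrow> bridge_ratio \<epsilon> K G \<in> bridge_ratios \<epsilon> K"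
  by (simp add: bridge_ratios_def)

lemma bridge_ratios_nonneg:
  fixes K :: "real set"
  assumes "compact K" "x \<in> bridge_ratios \<epsilon> K"
  shows "0 \<le> x"
proof -
  obtain L G where "compact L" "G \<in> gaps L" "x = bridge_ratio \<epsilon> L G"
    using assms(2,1) by (rule bridge_ratiosE)
  then show ?thesis
    using right_bridge_end_bounds[of L G \<epsilon>] glen_gap_pos[OF compact_imp_closed, of L G]
    by (simp add: bridge_ratio_def)
qed

lemma bridge_ratio_antimono:
  fixes K :: "real set"
  assumes "compact K" "G \<in> gaps K" "\<epsilon> \<le> \<epsilon>'" "\<epsilon>' < 1"
  shows "bridge_ratio \<epsilon>' K G \<le> bridge_ratio \<epsilon> K G"
  unfolding bridge_ratio_def
  using right_bridge_end_antimono[OF assms] glen_gap_pos[OF compact_imp_closed[OF assms(1)] assms(2)]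
  by (intro divide_right_mono) auto

lemma bridge_ratio_lower_bound:
  fixes K :: "real set"
  assumes "compact K" "G \<in> gaps K" "0 \<le> \<epsilon>" "\<epsilon> < 1"
    and t: "0 \<le> t" "\<And>x. x \<in> bridge_ratios 0 K \<Longrightarrow> t \<le> x"
  shows "(1 - \<epsilon>) * t \<le> bridge_ratio \<epsilon> K G"
  using right_bridge_end_cases[OF assms(1-4)]
proof
  assume "right_bridge_end \<epsilon> K G = right_bridge_end 0 K G"
  then have "t \<le> bridge_ratio \<epsilon> K G"
    using t(2)[OF bridge_ratio_mem[OF assms(2)]] by (simp add: bridge_ratio_def)
  moreover have "(1 - \<epsilon>) * t \<le> t"
    using t(1) assms(3,4) by (intro mult_left_le_one_le) auto
  ultimately show ?thesis
    by linarith
next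
  assume "\<exists>H\<in>gaps K. (1 - \<epsilon>) * glen G \<le> glen H \<and> left_bridge_end 0 K H = Sup G
    \<and> right_bridge_end \<epsilon> K G = Inf H"
  then obtain H where H: "H \<in> gaps K" "(1 - \<epsilon>) * glen G \<le> glen H"
    "left_bridge_end 0 K H = Sup G" "right_bridge_end \<epsilon> K G = Inf H"
    by blast
  have K: "closed K"
    using assms(1) by (rule compact_imp_closed)
  have "bridge_ratio 0 (uminus ` K) (uminus ` H) = (Inf H - Sup G) / glen H"
    using H(3) by (simp add: bridge_ratio_def left_bridge_end_uminus[OF K] Sup_uminus_image_real)
  moreover have "bridge_ratio 0 (uminus ` K) (uminus ` H) \<in> bridge_ratios 0 K"
    using bridge_ratio_mem[OF uminus_image_mem_gaps[OF K H(1)]] by (simp add: bridge_ratios_uminus)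
  ultimately have "t \<le> (Inf H - Sup G) / glen H"
    using t(2) by simp
  then have "t * glen H \<le> Inf H - Sup G"
    using glen_gap_pos[OF K H(1)] by (simp add: pos_le_divide_eq)
  moreover have "(1 - \<epsilon>) * t * glen G \<le> t * glen H"
    using mult_left_mono[OF H(2) t(1)] by (simp add: ac_simps)
  ultimately show ?thesis
    using H(4) glen_gap_pos[OF K assms(2)] by (simp add: bridge_ratio_def pos_le_divide_eq)
qed

lemma eps_thickness_nonneg:
  fixes K :: "real set"
  assumes "compact K" "gaps K \<noteq> {}"
  shows "0 \<le> eps_thickness \<epsilon> K"
  unfolding eps_thickness_eq_Inf_bridge_ratios[OF compact_imp_closed[OF assms(1)]]
  using assms(2) bridge_ratios_nonneg[OF assms(1)]
  by (intro cInf_greatest) (auto simp: bridge_ratios_def)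

lemma bdd_below_bridge_ratios:
  fixes K :: "real set"
  assumes "compact K"
  shows "bdd_below (bridge_ratios \<epsilon> K)"
  using bridge_ratios_nonneg[OF assms] by (auto simp: bdd_below_def)

lemma eps_thickness_le_thickness:
  fixes K :: "real set"
  assumes "compact K" "gaps K \<noteq> {}" "0 \<le> \<epsilon>" "\<epsilon> < 1"
  shows "eps_thickness \<epsilon> K \<le> thickness K"
  unfolding thickness_def eps_thickness_eq_Inf_bridge_ratios[OF compact_imp_closed[OF assms(1)]]
proof (rule cInf_greatest)
  show "bridge_ratios 0 K \<noteq> {}"
    using assms(2) by (simp add: bridge_ratios_def)
next
  fix x assume "x \<in> bridge_ratios 0 K"
  then obtain L G where L: "compact L" "\<And>\<epsilon>'. bridge_ratios \<epsilon>' L = bridge_ratios \<epsilon>' K"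
    "G \<in> gaps L" "x = bridge_ratio 0 L G"
    by (rule bridge_ratiosE[OF _ assms(1)]) blast
  have "Inf (bridge_ratios \<epsilon> K) \<le> bridge_ratio \<epsilon> L G"
    using bridge_ratio_mem[OF L(3)] L(2) bdd_below_bridge_ratios[OF assms(1)]
    by (auto intro: cInf_lower)
  also have "\<dots> \<le> x"
    using bridge_ratio_antimono[OF L(1,3) assms(3,4)] L(4) by simp
  finally show "Inf (bridge_ratios \<epsilon> K) \<le> x" .
qed

lemma eps_thickness_ge:
  fixes K :: "real set"
  assumes "compact K" "gaps K \<noteq> {}" "0 \<le> \<epsilon>" "\<epsilon> < 1"
  shows "(1 - \<epsilon>) * thickness K \<le> eps_thickness \<epsilon> K"
proof -
  have Inf_eq: "eps_thickness \<epsilon>' K = Inf (bridge_ratios \<epsilon>' K)" for \<epsilon>'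
    using assms(1) by (simp add: eps_thickness_eq_Inf_bridge_ratios compact_imp_closed)
  have thickness_le: "thickness K \<le> x" if "x \<in> bridge_ratios 0 K" for x
    unfolding thickness_def Inf_eq using that bdd_below_bridge_ratios[OF assms(1)] by (rule cInf_lower)
  show ?thesis
    unfolding Inf_eq
  proof (rule cInf_greatest)
    show "bridge_ratios \<epsilon> K \<noteq> {}"
      using assms(2) by (simp add: bridge_ratios_def)
  next
    fix x assume "x \<in> bridge_ratios \<epsilon> K"
    then obtain L G where L: "compact L" "\<And>\<epsilon>'. bridge_ratios \<epsilon>' L = bridge_ratios \<epsilon>' K"
      "G \<in> gaps L" "x = bridge_ratio \<epsilon> L G"
      by (rule bridge_ratiosE[OF _ assms(1)]) blast
    show "(1 - \<epsilon>) * thickness K \<le> x"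
      using bridge_ratio_lower_bound[OF L(1,3) assms(3,4)] L(2,4) thickness_le
        eps_thickness_nonneg[OF assms(1,2)] by (simp add: thickness_def)
  qed
qed

lemma eps_thickness_tendsto_thickness:
  fixes K :: "real set"
  assumes "compact K" "gaps K \<noteq> {}"
  shows "((\<lambda>\<epsilon>. eps_thickness \<epsilon> K) \<longlongrightarrow> thickness K) (at_right 0)"
proof -
  have small: "\<forall>\<^sub>F \<epsilon> in at_right 0. 0 < \<epsilon> \<and> \<epsilon> < (1::real)"
    by (rule eventually_at_rightI[of 0 1]) auto
  have "\<forall>\<^sub>F \<epsilon> in at_right 0. (1 - \<epsilon>) * thickness K \<le> eps_thickness \<epsilon> K"
    using small by (rule eventually_mono) (use eps_thickness_ge[OF assms] in auto)
  moreover have "\<forall>\<^sub>F \<epsilon> in at_right 0. eps_thickness \<epsilon> K \<le> thickness K"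
    using small by (rule eventually_mono) (use eps_thickness_le_thickness[OF assms] in auto)
  moreover have "((\<lambda>\<epsilon>. (1 - \<epsilon>) * thickness K) \<longlongrightarrow> (1 - 0) * thickness K) (at_right 0)"
    by (intro tendsto_intros)
  ultimately show ?thesis
    using tendsto_sandwich by fastforce
qed

theorem mainTheorem13:
  fixes C :: "real set"
  assumes "cantor_set C"
  shows "(\<forall>\<epsilon>::real. 0 < \<epsilon> \<and> \<epsilon> < 1 \<longrightarrow>
            (1 - \<epsilon>)^2 * thickness C \<le> eps_thickness \<epsilon> C
          \<and> eps_thickness \<epsilon> C \<le> thickness C)
       \<and> ((\<lambda>\<epsilon>. eps_thickness \<epsilon> C) \<longlongrightarrow> thickness C) (at_right 0)"
proof -
  have C: "compact C" "gaps C \<noteq> {}"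
    using assms cantor_set_gaps_nonempty by (auto simp: cantor_set_def)
  have "(1 - \<epsilon>)^2 * thickness C \<le> eps_thickness \<epsilon> C" if "0 < \<epsilon>" "\<epsilon> < 1" for \<epsilon>
  proof -
    have "(1 - \<epsilon>)^2 * thickness C = (1 - \<epsilon>) * ((1 - \<epsilon>) * thickness C)"
      by (simp add: power2_eq_square)
    also have "\<dots> \<le> (1 - \<epsilon>) * thickness C"
      using that eps_thickness_nonneg[OF C, of 0] by (intro mult_left_le_one_le) (auto simp: thickness_def)
    also have "\<dots> \<le> eps_thickness \<epsilon> C"
      using eps_thickness_ge[OF C] that by simp
    finally show ?thesis .
  qed
  then show ?thesis
    using eps_thickness_le_thickness[OF C] eps_thickness_tendsto_thickness[OF C] by simp
qed

end
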